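(* For every positive integer $t$, $md_t \geq \left\lceil \frac{t+1}{2} \right\rceil$. Equivalently, for every voter matrix $V$ with $t$ topics there is a proposal supported by $V$ that contains at least $\lceil (t+1)/2\rceil$ entries $Y$.
   Context: Let $t$ be a positive integer (the number of topics). A voter matrix with $t$ topics is a matrix $V\in\{Y,N\}^{n\times t}$ for some positive integer $n$ (the number of voters; rows are voters), subject to the standing assumption that in every column the number of entries $Y$ is at least the number of entries $N$ (so $Y$ is the majority opinion on every topic). $\mathcal{V}_t$ denotes the set of all voter matrices with $t$ topics and any number of voters. A proposal is a vector $p\in\{Y,N\}^t$. A voter (row) $v$ supports $p$ if the Hamming distance between $v$ and $p$ is at most $t/2$. A proposal $p$ is supported by $V$ if at least $n/2$ of the rows of $V$ support $p$. The number of majority decisions of a proposal is the number of topics on which it agrees with the majority opinion, i.e. its number of entries $Y$. For $V$, $md_V$ is the maximum number $m$ such that there exists a proposal supported by $V$ with $m$ majority decisions, and $md_t=\min_{V\in\mathcal{V}_t} md_V$. *)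

theory Defs
  imports Complex_Main
begin

text \<open>A voter matrix with n voters and t topics is encoded as V :: nat => nat => bool,
  where V i j = True means entry Y (voter i, topic j), for i < n and j < t.
  Proposals are p :: nat => bool, only p j for j < t matters (True = Y).\<close>

definition voter_matrix :: "nat \<Rightarrow> nat \<Rightarrow> (nat \<Rightarrow> nat \<Rightarrow> bool) \<Rightarrow> bool" where
  "voter_matrix n t V \<longleftrightarrow> n \<ge> 1 \<and>
     (\<forall>j<t. card {i. i < n \<and> \<not> V i j} \<le> card {i. i < n \<and> V i j})"

definition hamming :: "nat \<Rightarrow> (nat \<Rightarrow> bool) \<Rightarrow> (nat \<Rightarrow> bool) \<Rightarrow> nat" where
  "hamming t v p = card {j. j < t \<and> v j \<noteq> p j}"

definition supports :: "nat \<Rightarrow> (nat \<Rightarrow> bool) \<Rightarrow> (nat \<Rightarrow> bool) \<Rightarrow> bool" where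
  "supports t v p \<longleftrightarrow> real (hamming t v p) \<le> real t / 2"

definition supported :: "nat \<Rightarrow> nat \<Rightarrow> (nat \<Rightarrow> nat \<Rightarrow> bool) \<Rightarrow> (nat \<Rightarrow> bool) \<Rightarrow> bool" where
  "supported n t V p \<longleftrightarrow> real (card {i. i < n \<and> supports t (V i) p}) \<ge> real n / 2"

definition majority_decisions :: "nat \<Rightarrow> (nat \<Rightarrow> bool) \<Rightarrow> nat" where
  "majority_decisions t p = card {j. j < t \<and> p j}"

definition md_V :: "nat \<Rightarrow> nat \<Rightarrow> (nat \<Rightarrow> nat \<Rightarrow> bool) \<Rightarrow> nat" where
  "md_V n t V = Max {majority_decisions t p | p. supported n t V p}"

definition md :: "nat \<Rightarrow> nat" where
  "md t = Inf {md_V n t V | n V. voter_matrix n t V}"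

end

theory Submission
  imports Defs
begin

text \<open>Identify a proposal with its set \<open>Q \<subseteq> {..<t}\<close> of \<open>Y\<close> entries and weigh it by its
  balance \<open>2 |Q| - t\<close>. For odd \<open>t = 2m + 1\<close> and a single voter \<open>v\<close>, pairing each \<open>Q\<close> with
  \<open>Q \<union> {j}\<close> shows that the balances of the proposals supported by \<open>v\<close> add up to
  \<open>binomial (2m) m\<close> times the balance of \<open>v\<close> itself. Summed over all voters this is
  nonnegative, because every column has a \<open>Y\<close> majority. As the balances of all proposals
  add up to zero, \<open>\<Sum>\<^sub>Q (2 |Q| - t) (2 S(Q) - n) \<ge> 0\<close>, where \<open>S(Q)\<close> counts the supporters of
  \<open>Q\<close>. If no \<open>Q\<close> with \<open>|Q| > t/2\<close> had \<open>2 S(Q) \<ge> n\<close>, every term would be negative, since for odd \<open>t\<close> a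
  voter supports \<open>Q\<close> exactly when it does not support the complement of \<open>Q\<close>. Even \<open>t\<close> reduces
  to \<open>t - 1\<close> by adding \<open>Y\<close> on the last topic.\<close>

lemma sum_Pow_insert:
  assumes "finite A" "a \<notin> A"
  shows "(\<Sum>Q\<in>Pow (insert a A). f Q) = (\<Sum>P\<in>Pow A. f P + f (insert a P))"
proof -
  have "inj_on (insert a) (Pow A)"
    using assms(2) by (intro inj_onI) (metis PowD Diff_insert_absorb subsetD)
  moreover have "Pow A \<inter> insert a ` Pow A = {}"
    using assms(2) by auto
  ultimately show ?thesis
    using assms(1) by (simp add: Pow_insert sum.union_disjoint sum.reindex sum.distrib)
qed

lemma sum_Pow_balance:
  assumes "finite A"
  shows "(\<Sum>Q\<in>Pow A. 2 * int (card Q) - int (card A)) = 0"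
proof -
  have "(\<Sum>Q\<in>Pow A. 2 * int (card Q) - int (card A))
      = (\<Sum>Q\<in>Pow A. 2 * int (card (A - Q)) - int (card A))"
    by (rule sum.reindex_bij_witness[of _ "\<lambda>Q. A - Q" "\<lambda>Q. A - Q"]) (auto simp: double_diff)
  also have "\<dots> = - (\<Sum>Q\<in>Pow A. 2 * int (card Q) - int (card A))"
    unfolding sum_negf[symmetric]
    using assms by (intro sum.cong refl) (auto simp: card_Diff_subset finite_subset card_mono of_nat_diff)
  finally show ?thesis by linarith
qed

lemma sum_sign_eq_card_diff:
  assumes "finite A"
  shows "(\<Sum>x\<in>A. if P x then 1 else -1 :: int) = int (card {x \<in> A. P x}) - int (card {x \<in> A. \<not> P x})"
  using assms by (simp add: sum.If_cases Int_def Diff_eq)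

lemma card_filter_add_card_filter_not:
  assumes "finite A"
  shows "card {x \<in> A. P x} + card {x \<in> A. \<not> P x} = card A"
  using card_Int_Diff[OF assms, of "{x. P x}"] by (simp add: Int_def Diff_eq)

lemma sum_sign_eq_double_card:
  assumes "finite A"
  shows "(\<Sum>x\<in>A. if P x then 1 else -1 :: int) = 2 * int (card {x \<in> A. P x}) - int (card A)"
  using sum_sign_eq_card_diff[OF assms, of P] card_filter_add_card_filter_not[OF assms, of P]
  by simp

lemma card_Pow_disagreeing:
  assumes "finite T"
  shows "card {P \<in> Pow T. card {i \<in> T. v i \<noteq> (i \<in> P)} = k} = card T choose k"
proof -
  define D where "D P = {i \<in> T. v i \<noteq> (i \<in> P)}" for P
  have involution: "D (D P) = P" if "P \<subseteq> T" for P
    using that by (auto simp: D_def)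
  have "bij_betw D {P \<in> Pow T. card (D P) = k} {B. B \<subseteq> T \<and> card B = k}"
    by (rule bij_betw_byWitness[where f' = D]) (use involution in \<open>auto simp: D_def\<close>)
  then have "card {P \<in> Pow T. card (D P) = k} = card {B. B \<subseteq> T \<and> card B = k}"
    by (rule bij_betw_same_card)
  then show ?thesis
    unfolding D_def n_subsets[OF assms] .
qed

lemma supports_iff_double_hamming: "supports t v p \<longleftrightarrow> 2 * hamming t v p \<le> t"
  unfolding supports_def by linarith

lemma supported_iff_double_card:
  "supported n t V p \<longleftrightarrow> n \<le> 2 * card {i. i < n \<and> supports t (V i) p}"
  unfolding supported_def by linarith

lemma hamming_cong: "(\<And>j. j < t \<Longrightarrow> p j = q j) \<Longrightarrow> hamming t v p = hamming t v q"
  unfolding hamming_def by (intro arg_cong[where f = card]) auto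

lemma hamming_le: "hamming t v p \<le> t"
  unfolding hamming_def by (rule order_trans[OF card_mono[of "{..<t}"]]) auto

lemma hamming_Suc_le: "hamming (Suc t) v p \<le> Suc (hamming t v p)"
proof -
  have "card {j. j < Suc t \<and> v j \<noteq> p j} \<le> card (insert t {j. j < t \<and> v j \<noteq> p j})"
    by (rule card_mono) auto
  also have "\<dots> \<le> Suc (card {j. j < t \<and> v j \<noteq> p j})"
    by (simp add: card_insert_if)
  finally show ?thesis
    unfolding hamming_def .
qed

lemma supports_Suc_if_odd:
  assumes "odd t" "supports t v p"
  shows "supports (Suc t) v p"
proof -
  have "2 * hamming t v p < t"
    using assms unfolding supports_iff_double_hamming by presburger
  then show ?thesis
    using hamming_Suc_le[of t v p] by (simp add: supports_iff_double_hamming)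
qed

lemma supports_complement_iff:
  assumes "odd t"
  shows "supports t v (\<lambda>j. j \<in> {..<t} - Q) \<longleftrightarrow> \<not> supports t v (\<lambda>j. j \<in> Q)"
proof -
  have disagree: "{j. j < t \<and> v j \<noteq> (j \<in> {..<t} - Q)} = {..<t} - {j. j < t \<and> v j \<noteq> (j \<in> Q)}"
    by auto
  have "hamming t v (\<lambda>j. j \<in> {..<t} - Q) = t - hamming t v (\<lambda>j. j \<in> Q)"
    unfolding hamming_def disagree by (subst card_Diff_subset) auto
  with hamming_le[of t v "\<lambda>j. j \<in> Q"] assms show ?thesis
    unfolding supports_iff_double_hamming by presburger
qed

lemma supported_mono:
  assumes "supported n s V p" "\<And>i. i < n \<Longrightarrow> supports s (V i) p \<Longrightarrow> supports t (V i) q"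
  shows "supported n t V q"
proof -
  have "card {i. i < n \<and> supports s (V i) p} \<le> card {i. i < n \<and> supports t (V i) q}"
    using assms(2) by (intro card_mono) auto
  then show ?thesis
    using assms(1) unfolding supported_iff_double_card by linarith
qed

lemma hamming_split_at:
  assumes "j < t" "P \<subseteq> {..<t} - {j}"
  shows "hamming t v (\<lambda>i. i \<in> P) = card {i \<in> {..<t} - {j}. v i \<noteq> (i \<in> P)} + of_bool (v j)"
    and "hamming t v (\<lambda>i. i \<in> insert j P) = card {i \<in> {..<t} - {j}. v i \<noteq> (i \<in> P)} + of_bool (\<not> v j)"
proof -
  let ?D = "{i \<in> {..<t} - {j}. v i \<noteq> (i \<in> P)}"
  have "{i. i < t \<and> v i \<noteq> (i \<in> P)} = ?D \<union> (if v j then {j} else {})"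
    and "{i. i < t \<and> v i \<noteq> (i \<in> insert j P)} = ?D \<union> (if v j then {} else {j})"
    using assms by auto
  then show "hamming t v (\<lambda>i. i \<in> P) = card ?D + of_bool (v j)"
    and "hamming t v (\<lambda>i. i \<in> insert j P) = card ?D + of_bool (\<not> v j)"
    unfolding hamming_def by auto
qed

lemma sum_supported_sign:
  assumes t: "t = 2 * m + 1" and j: "j < t"
  shows "(\<Sum>Q\<in>Pow {..<t}. if supports t v (\<lambda>i. i \<in> Q) then (if j \<in> Q then 1 else -1) else 0 :: int)
       = (if v j then 1 else -1) * int (2 * m choose m)"
proof -
  define T where "T = {..<t} - {j}"
  define d where "d P = card {i \<in> T. v i \<noteq> (i \<in> P)}" for P
  let ?g = "\<lambda>Q. if supports t v (\<lambda>i. i \<in> Q) then (if j \<in> Q then 1 else -1) else 0 :: int"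
  let ?s = "if v j then 1 else -1 :: int"
  have T: "finite T" "j \<notin> T" "{..<t} = insert j T" "card T = 2 * m"
    using j t by (auto simp: T_def)
  \<comment> \<open>\<open>v\<close> is at distance \<open>d P + [v j]\<close> from \<open>P\<close> and \<open>d P + [\<not> v j]\<close> from \<open>insert j P\<close>, so the
    two contributions cancel unless \<open>d P = m\<close>.\<close>
  have pair: "?g P + ?g (insert j P) = ?s * of_bool (d P = m)" if "P \<in> Pow T" for P
  proof -
    have "P \<subseteq> {..<t} - {j}"
      using that by (simp add: T_def)
    then show ?thesis
      using hamming_split_at[OF j, of P v] t
      unfolding supports_iff_double_hamming d_def T_def by auto
  qed
  have "(\<Sum>Q\<in>Pow {..<t}. ?g Q) = (\<Sum>P\<in>Pow T. ?s * of_bool (d P = m))"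
    unfolding T(3) sum_Pow_insert[OF T(1,2)] using pair by (rule sum.cong[OF refl])
  also have "\<dots> = ?s * int (card {P \<in> Pow T. d P = m})"
    using T(1) by (simp add: sum_distrib_left[symmetric] Int_def)
  also have "card {P \<in> Pow T. d P = m} = 2 * m choose m"
    unfolding d_def card_Pow_disagreeing[OF T(1)] T(4) ..
  finally show ?thesis .
qed

lemma sum_supported_balance:
  assumes t: "t = 2 * m + 1"
  shows "(\<Sum>Q\<in>Pow {..<t}. if supports t v (\<lambda>i. i \<in> Q) then 2 * int (card Q) - int t else 0)
       = int (2 * m choose m) * (2 * int (card {j. j < t \<and> v j}) - int t)"
proof -
  have "(\<Sum>Q\<in>Pow {..<t}. if supports t v (\<lambda>i. i \<in> Q) then 2 * int (card Q) - int t else 0)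
      = (\<Sum>Q\<in>Pow {..<t}. \<Sum>j<t. if supports t v (\<lambda>i. i \<in> Q) then (if j \<in> Q then 1 else -1) else 0)"
  proof (rule sum.cong[OF refl])
    fix Q assume "Q \<in> Pow {..<t}"
    then have "{j \<in> {..<t}. j \<in> Q} = Q"
      by auto
    then show "(if supports t v (\<lambda>i. i \<in> Q) then 2 * int (card Q) - int t else 0)
        = (\<Sum>j<t. if supports t v (\<lambda>i. i \<in> Q) then (if j \<in> Q then 1 else -1) else 0)"
      using sum_sign_eq_double_card[of "{..<t}" "\<lambda>j. j \<in> Q"] by simp
  qed
  also have "\<dots> = (\<Sum>j<t. \<Sum>Q\<in>Pow {..<t}. if supports t v (\<lambda>i. i \<in> Q) then (if j \<in> Q then 1 else -1) else 0)"
    by (rule sum.swap)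
  also have "\<dots> = int (2 * m choose m) * (\<Sum>j<t. if v j then 1 else -1)"
    by (simp add: sum_supported_sign[OF t] sum_distrib_left mult.commute)
  also have "\<dots> = int (2 * m choose m) * (2 * int (card {j. j < t \<and> v j}) - int t)"
    using sum_sign_eq_double_card[of "{..<t}" v] by simp
  finally show ?thesis .
qed

lemma sum_balance_mult_supporters:
  fixes V :: "nat \<Rightarrow> nat \<Rightarrow> bool"
  assumes t: "t = 2 * m + 1"
  shows "(\<Sum>Q\<in>Pow {..<t}. (2 * int (card Q) - int t) * int (card {i. i < n \<and> supports t (V i) (\<lambda>j. j \<in> Q)}))
       = int (2 * m choose m) * (\<Sum>i<n. 2 * int (card {j. j < t \<and> V i j}) - int t)"
proof -
  have count: "c * int (card {i. i < n \<and> P i}) = (\<Sum>i<n. if P i then c else 0)" for c :: int and P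
    by (simp add: sum.If_cases Int_def mult.commute)
  have "(\<Sum>Q\<in>Pow {..<t}. (2 * int (card Q) - int t) * int (card {i. i < n \<and> supports t (V i) (\<lambda>j. j \<in> Q)}))
      = (\<Sum>i<n. \<Sum>Q\<in>Pow {..<t}. if supports t (V i) (\<lambda>j. j \<in> Q) then 2 * int (card Q) - int t else 0)"
    unfolding count by (rule sum.swap)
  also have "\<dots> = int (2 * m choose m) * (\<Sum>i<n. 2 * int (card {j. j < t \<and> V i j}) - int t)"
    by (simp add: sum_supported_balance[OF t] sum_distrib_left)
  finally show ?thesis .
qed

lemma sum_row_balance_nonneg:
  fixes V :: "nat \<Rightarrow> nat \<Rightarrow> bool"
  assumes "\<forall>j<t. card {i. i < n \<and> \<not> V i j} \<le> card {i. i < n \<and> V i j}"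
  shows "0 \<le> (\<Sum>i<n. 2 * int (card {j. j < t \<and> V i j}) - int t)"
proof -
  have "(\<Sum>i<n. 2 * int (card {j. j < t \<and> V i j}) - int t) = (\<Sum>i<n. \<Sum>j<t. if V i j then 1 else -1)"
    using sum_sign_eq_double_card[of "{..<t}"] by simp
  also have "\<dots> = (\<Sum>j<t. \<Sum>i<n. if V i j then 1 else -1)"
    by (rule sum.swap)
  also have "\<dots> \<ge> 0"
  proof (rule sum_nonneg)
    fix j assume "j \<in> {..<t}"
    then show "0 \<le> (\<Sum>i<n. if V i j then 1 else -1 :: int)"
      using assms by (subst sum_sign_eq_card_diff) auto
  qed
  finally show ?thesis .
qed

lemma exists_supported_proposal_odd:
  fixes V :: "nat \<Rightarrow> nat \<Rightarrow> bool"
  assumes t: "t = 2 * m + 1"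
    and columns: "\<forall>j<t. card {i. i < n \<and> \<not> V i j} \<le> card {i. i < n \<and> V i j}"
  shows "\<exists>Q\<subseteq>{..<t}. m + 1 \<le> card Q \<and> supported n t V (\<lambda>j. j \<in> Q)"
proof (rule ccontr)
  assume none: "\<not> ?thesis"
  define S where "S Q = card {i. i < n \<and> supports t (V i) (\<lambda>j. j \<in> Q)}" for Q
  define b where "b Q = 2 * int (card Q) - int t" for Q :: "nat set"
  have S_complement: "S ({..<t} - Q) + S Q = n" for Q
  proof -
    have "odd t"
      using t by simp
    have "S ({..<t} - Q) = card {i. i < n \<and> \<not> supports t (V i) (\<lambda>j. j \<in> Q)}"
      unfolding S_def supports_complement_iff[OF \<open>odd t\<close>] by (rule refl)
    then show ?thesis
      using card_filter_add_card_filter_not[of "{..<n}" "\<lambda>i. supports t (V i) (\<lambda>j. j \<in> Q)"]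
      by (simp add: S_def)
  qed
  have negative: "b Q * (2 * int (S Q) - int n) < 0" if Q: "Q \<in> Pow {..<t}" for Q
  proof (cases "m + 1 \<le> card Q")
    case True
    then have "2 * S Q < n"
      using none Q by (auto simp: S_def supported_iff_double_card)
    then show ?thesis
      using True t by (simp add: b_def mult_pos_neg)
  next
    case False
    have "card ({..<t} - Q) = t - card Q"
      using Q by (simp add: card_Diff_subset finite_subset)
    then have "m + 1 \<le> card ({..<t} - Q)"
      using False t by simp
    then have "2 * S ({..<t} - Q) < n"
      using none by (auto simp: S_def supported_iff_double_card)
    then have "n < 2 * S Q"
      using S_complement[of Q] by simp
    then show ?thesis
      using False t by (simp add: b_def mult_neg_pos)
  qed
  have "(\<Sum>Q\<in>Pow {..<t}. b Q * (2 * int (S Q) - int n)) < (\<Sum>Q\<in>Pow {..<t}. 0)"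
    using negative by (intro sum_strict_mono) auto
  moreover have "(\<Sum>Q\<in>Pow {..<t}. b Q * (2 * int (S Q) - int n))
      = 2 * (\<Sum>Q\<in>Pow {..<t}. b Q * int (S Q)) - int n * (\<Sum>Q\<in>Pow {..<t}. b Q)"
    by (simp add: algebra_simps sum_subtractf sum_distrib_left)
  moreover have "(\<Sum>Q\<in>Pow {..<t}. b Q) = 0"
    using sum_Pow_balance[of "{..<t}"] by (simp add: b_def)
  moreover have "0 \<le> (\<Sum>Q\<in>Pow {..<t}. b Q * int (S Q))"
    using sum_balance_mult_supporters[OF t, of n V] sum_row_balance_nonneg[OF columns]
    by (simp add: b_def S_def)
  ultimately show False
    by simp
qed

lemma exists_supported_proposal:
  fixes V :: "nat \<Rightarrow> nat \<Rightarrow> bool"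
  assumes "t \<ge> 1"
    and columns: "\<forall>j<t. card {i. i < n \<and> \<not> V i j} \<le> card {i. i < n \<and> V i j}"
  shows "\<exists>Q\<subseteq>{..<t}. t div 2 + 1 \<le> card Q \<and> supported n t V (\<lambda>j. j \<in> Q)"
proof (cases "odd t")
  case True
  then obtain m where t: "t = 2 * m + 1"
    by (rule oddE)
  then have "t div 2 + 1 = m + 1"
    by simp
  then show ?thesis
    using exists_supported_proposal_odd[OF t columns] by simp
next
  case False
  then have "t = Suc (2 * (t div 2 - 1) + 1)"
    using assms(1) by presburger
  then obtain m where t: "t = Suc (2 * m + 1)" ..
  let ?s = "2 * m + 1"
  have "\<forall>j<?s. card {i. i < n \<and> \<not> V i j} \<le> card {i. i < n \<and> V i j}"
    using columns t by simp
  then have "\<exists>Q\<subseteq>{..<?s}. m + 1 \<le> card Q \<and> supported n ?s V (\<lambda>j. j \<in> Q)"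
    by (rule exists_supported_proposal_odd[OF refl])
  then obtain Q where Q: "Q \<subseteq> {..<?s}" "m + 1 \<le> card Q" "supported n ?s V (\<lambda>j. j \<in> Q)"
    by blast
  have "supports t v (\<lambda>j. j \<in> insert ?s Q)" if "supports ?s v (\<lambda>j. j \<in> Q)" for v
  proof -
    have "hamming ?s v (\<lambda>j. j \<in> insert ?s Q) = hamming ?s v (\<lambda>j. j \<in> Q)"
      by (rule hamming_cong) simp
    then have "supports ?s v (\<lambda>j. j \<in> insert ?s Q)"
      using that unfolding supports_iff_double_hamming by simp
    then show ?thesis
      unfolding t by (intro supports_Suc_if_odd) simp_all
  qed
  then have "supported n t V (\<lambda>j. j \<in> insert ?s Q)"
    by (rule supported_mono[OF Q(3)])
  moreover have "card (insert ?s Q) = card Q + 1"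
    using Q(1) finite_subset[OF Q(1)] by (auto simp: card_insert_if)
  moreover have "insert ?s Q \<subseteq> {..<t}"
    using Q(1) t by auto
  ultimately show ?thesis
    using Q(2) t by (intro exI[of _ "insert ?s Q"] conjI) simp_all
qed

lemma majority_decisions_le: "majority_decisions t p \<le> t"
  unfolding majority_decisions_def by (rule order_trans[OF card_mono[of "{..<t}"]]) auto

lemma majority_decisions_le_md_V:
  assumes "supported n t V p"
  shows "majority_decisions t p \<le> md_V n t V"
proof -
  let ?M = "{majority_decisions t p | p. supported n t V p}"
  have "?M \<subseteq> {..t}"
    using majority_decisions_le by auto
  then have "finite ?M"
    by (rule finite_subset) simp
  moreover have "majority_decisions t p \<in> ?M"
    using assms by blast
  ultimately show ?thesis
    unfolding md_V_def by (rule Max_ge)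
qed

lemma nat_ceiling_half_Suc: "nat \<lceil>(real t + 1) / 2\<rceil> = t div 2 + 1"
proof -
  have "\<lceil>(real t + 1) / 2\<rceil> = int (t div 2 + 1)"
    by (rule ceiling_unique) (cases "even t"; auto elim!: evenE oddE)+
  then show ?thesis
    by simp
qed

lemma majority_decisions_indicator:
  assumes "Q \<subseteq> {..<t}"
  shows "majority_decisions t (\<lambda>j. j \<in> Q) = card Q"
proof -
  have "{j. j < t \<and> j \<in> Q} = Q"
    using assms by auto
  then show ?thesis
    by (simp add: majority_decisions_def)
qed

lemma md_V_ge:
  assumes "t \<ge> 1" "voter_matrix n t V"
  shows "t div 2 + 1 \<le> md_V n t V"
proof -
  have "\<forall>j<t. card {i. i < n \<and> \<not> V i j} \<le> card {i. i < n \<and> V i j}"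
    using assms(2) by (simp add: voter_matrix_def)
  then obtain Q where Q: "Q \<subseteq> {..<t}" "t div 2 + 1 \<le> card Q" "supported n t V (\<lambda>j. j \<in> Q)"
    using exists_supported_proposal[OF assms(1)] by blast
  then show ?thesis
    using majority_decisions_le_md_V[OF Q(3)] by (simp add: majority_decisions_indicator)
qed

theorem theorem4p6:
  fixes t :: nat
  assumes "t \<ge> 1"
  shows "md t \<ge> nat \<lceil>(real t + 1) / 2\<rceil>"
proof -
  have "voter_matrix 1 t (\<lambda>i j. True)"
    by (simp add: voter_matrix_def)
  then have "{md_V n t V | n V. voter_matrix n t V} \<noteq> {}"
    by blast
  then have "t div 2 + 1 \<le> md t"
    unfolding md_def by (rule cInf_greatest) (use md_V_ge[OF assms] in blast)
  then show ?thesis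
    by (simp add: nat_ceiling_half_Suc)
qed

end
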